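(* Let $G$ be a graph on $V$ and $W\subseteq V$ nonempty. Then $W$ is minimally reducible in $G$ if and only if $W$ is the domain of a combinatorial reduction rule applicable to $G$, i.e. either $W=\{v\}$ where $v$ has a loop, or $W=\{v_1,v_2\}$ where $v_1,v_2$ are adjacent loopless vertices, or $W=\{v\}$ where $v$ is loopless and has no neighbors. Consequently the minimal graph reductions of $G$ are exactly the applicable rules $\mathrm{gpr}_v$, $\mathrm{gdr}_{v_1,v_2}$, $\mathrm{gnr}_v$.
   Context: A graph means a finite simple graph in which loops are allowed, with adjacency matrix $A$ over $\mathbf F_2$ ($A_{vv}=1$ iff $v$ has a loop). Let $\mathcal V$ be the $\mathbf F_2$-vector space with basis $V$ and $\mathcal E(x,y)=x^TAy$. For $W\subseteq V$, $\langle W\rangle$ is the span and $\langle W\rangle^{\perp\mathcal E}=\{x:\mathcal E(x,w)=0\ \forall w\in\langle W\rangle\}$. $W$ is reducible in $G$ if $\langle W\rangle+\langle W\rangle^{\perp\mathcal E}=\mathcal V$. A nonempty $W$ is minimally reducible if it is reducible and no nonempty proper subset of it is reducible. The combinatorial reduction rules (with domain ordered first, $R$ the principal submatrix on the other vertices): $\mathrm{gpr}_v$ applies iff $v$ has a loop, $\begin{pmatrix}1&Q\\Q^T&R\end{pmatrix}\mapsto R-Q^TQ$; $\mathrm{gdr}_{v_1,v_2}$ applies iff $v_1,v_2$ are loopless and adjacent, $\begin{pmatrix}J&Q\\Q^T&R\end{pmatrix}\mapsto R-Q^TJQ$, $J=\begin{pmatrix}0&1\\1&0\end{pmatrix}$;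 $\mathrm{gnr}_v$ applies iff $v$ is loopless with no neighbors, $\begin{pmatrix}0&\mathbf 0\\ \mathbf 0^T&R\end{pmatrix}\mapsto R$. *)

theory Defs
  imports Main
begin

(* Vectors of the F_2-space with basis V are encoded as subsets x of V
   (x = support of the coordinate vector); vector addition is symmetric difference. *)

definition graph :: "'a set \<Rightarrow> ('a \<Rightarrow> 'a \<Rightarrow> bool) \<Rightarrow> bool" where
  "graph V A \<longleftrightarrow> finite V \<and> (\<forall>u v. A u v \<longrightarrow> A v u) \<and> (\<forall>u v. A u v \<longrightarrow> u \<in> V \<and> v \<in> V)"

definition vadd :: "'a set \<Rightarrow> 'a set \<Rightarrow> 'a set" where
  "vadd x y = (x - y) \<union> (y - x)"

(* bilinear form E(x,y) = x^T A y over F_2 (True = 1) *)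
definition bform :: "('a \<Rightarrow> 'a \<Rightarrow> bool) \<Rightarrow> 'a set \<Rightarrow> 'a set \<Rightarrow> bool" where
  "bform A x y \<longleftrightarrow> odd (card {(u, v). u \<in> x \<and> v \<in> y \<and> A u v})"

inductive_set span2 :: "'a set \<Rightarrow> 'a set set" for W :: "'a set" where
  zero: "{} \<in> span2 W"
| add: "x \<in> span2 W \<Longrightarrow> w \<in> W \<Longrightarrow> vadd x {w} \<in> span2 W"

definition perpE :: "'a set \<Rightarrow> ('a \<Rightarrow> 'a \<Rightarrow> bool) \<Rightarrow> 'a set \<Rightarrow> 'a set set" where
  "perpE V A W = {x. x \<subseteq> V \<and> (\<forall>w \<in> span2 W. \<not> bform A x w)}"

definition reducible :: "'a set \<Rightarrow> ('a \<Rightarrow> 'a \<Rightarrow> bool) \<Rightarrow> 'a set \<Rightarrow> bool" where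
  "reducible V A W \<longleftrightarrow>
     {vadd a b | a b. a \<in> span2 W \<and> b \<in> perpE V A W} = Pow V"

definition minimally_reducible :: "'a set \<Rightarrow> ('a \<Rightarrow> 'a \<Rightarrow> bool) \<Rightarrow> 'a set \<Rightarrow> bool" where
  "minimally_reducible V A W \<longleftrightarrow> W \<noteq> {} \<and> reducible V A W \<and>
     (\<forall>W'. W' \<subset> W \<and> W' \<noteq> {} \<longrightarrow> \<not> reducible V A W')"

end

theory Submission
  imports Defs
begin

(* The form E is bilinear, and E({u},{w}) = 1 iff u and w are adjacent.
   Since span W is spanned by the basis vectors of W, a vector x is E-orthogonal to
   span W iff E(x,{w}) = 0 for all w in W.  Hence W is reducible iff every x can be
   matched by some a in span W, i.e. E(a,{w}) = E(x,{w}) for all w in W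
   (then x = a + (a + x) with a + x orthogonal).

   From this criterion:
   - {v} with a loop, {v1,v2} with an edge between loopless v1,v2, and an isolated
     loopless {v} are reducible (their Gram matrices are invertible);
   - if W contains no adjacencies at all, reducibility forces every vertex of W to be
     isolated (match x = {u} for a neighbour u).
   The characterization of minimally reducible sets follows by a case distinction on
   whether W contains a loop, an edge, or neither. *)

lemma vadd_empty [simp]: "vadd {} x = x" "vadd x {} = x"
  by (auto simp: vadd_def)

lemma vadd_cancel_left: "vadd a (vadd a x) = x"
  by (auto simp: vadd_def)

lemma vadd_subset: "x \<subseteq> V \<Longrightarrow> y \<subseteq> V \<Longrightarrow> vadd x y \<subseteq> V"
  by (auto simp: vadd_def)

lemma span2_subset: "x \<in> span2 W \<Longrightarrow> x \<subseteq> W"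
  by (induction rule: span2.induct) (auto simp: vadd_def)

lemma span2_basis: "w \<in> W \<Longrightarrow> {w} \<in> span2 W"
  using span2.add[OF span2.zero, of w] by simp

lemma span2_vadd:
  assumes "a \<in> span2 W" and "b \<in> span2 W"
  shows "vadd a b \<in> span2 W"
  using assms(2)
proof (induction b rule: span2.induct)
  case zero
  show ?case using assms(1) by simp
next
  case (add y w)
  have "vadd a (vadd y {w}) = vadd (vadd a y) {w}"
    by (auto simp: vadd_def)
  then show ?case using add by (simp add: span2.add)
qed

lemma odd_card_vadd:
  assumes "finite P" and "finite Q"
  shows "odd (card (vadd P Q)) \<longleftrightarrow> (odd (card P) \<noteq> odd (card Q))"
proof -
  have "card (vadd P Q) = card (P - Q) + card (Q - P)"
    unfolding vadd_def using assms by (simp add: card_Un_disjoint Diff_Int_distrib2)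
  moreover have "card P = card (P \<inter> Q) + card (P - Q)" "card Q = card (P \<inter> Q) + card (Q - P)"
    using card_Int_Diff[OF assms(1), of Q] card_Int_Diff[OF assms(2), of P] by (simp_all add: Int_commute)
  ultimately show ?thesis by presburger
qed

lemma finite_adjacent_pairs:
  assumes "graph V A"
  shows "finite {(u, v). u \<in> x \<and> v \<in> y \<and> A u v}"
proof -
  have "{(u, v). u \<in> x \<and> v \<in> y \<and> A u v} \<subseteq> V \<times> V"
    using assms unfolding graph_def by auto
  then show ?thesis using assms unfolding graph_def by (meson finite_SigmaI rev_finite_subset)
qed

lemma bform_vadd_left:
  assumes "graph V A"
  shows "bform A (vadd x y) z \<longleftrightarrow> (bform A x z \<noteq> bform A y z)"
proof -
  have "{(u, v). u \<in> vadd x y \<and> v \<in> z \<and> A u v}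
        = vadd {(u, v). u \<in> x \<and> v \<in> z \<and> A u v} {(u, v). u \<in> y \<and> v \<in> z \<and> A u v}"
    by (auto simp: vadd_def)
  then show ?thesis
    unfolding bform_def by (simp add: odd_card_vadd finite_adjacent_pairs[OF assms])
qed

lemma bform_vadd_right:
  assumes "graph V A"
  shows "bform A x (vadd y z) \<longleftrightarrow> (bform A x y \<noteq> bform A x z)"
proof -
  have "{(u, v). u \<in> x \<and> v \<in> vadd y z \<and> A u v}
        = vadd {(u, v). u \<in> x \<and> v \<in> y \<and> A u v} {(u, v). u \<in> x \<and> v \<in> z \<and> A u v}"
    by (auto simp: vadd_def)
  then show ?thesis
    unfolding bform_def by (simp add: odd_card_vadd finite_adjacent_pairs[OF assms])
qed

lemma bform_empty_left [simp]: "\<not> bform A {} y"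
  and bform_empty_right [simp]: "\<not> bform A x {}"
  by (simp_all add: bform_def)

lemma bform_basis [simp]: "bform A {u} {w} \<longleftrightarrow> A u w"
proof -
  have "{(p, q). p \<in> {u} \<and> q \<in> {w} \<and> A p q} = (if A u w then {(u, w)} else {})"
    by auto
  then show ?thesis unfolding bform_def by simp
qed

lemma perpE_iff:
  assumes "graph V A"
  shows "x \<in> perpE V A W \<longleftrightarrow> x \<subseteq> V \<and> (\<forall>w \<in> W. \<not> bform A x {w})"
proof
  assume "x \<in> perpE V A W"
  then show "x \<subseteq> V \<and> (\<forall>w \<in> W. \<not> bform A x {w})"
    unfolding perpE_def by (simp add: span2_basis)
next
  assume x: "x \<subseteq> V \<and> (\<forall>w \<in> W. \<not> bform A x {w})"
  have "\<not> bform A x y" if "y \<in> span2 W" for y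
    using that
  proof (induction rule: span2.induct)
    case zero
    then show ?case by simp
  next
    case (add y w)
    then show ?case using x by (simp add: bform_vadd_right[OF assms])
  qed
  then show "x \<in> perpE V A W"
    unfolding perpE_def using x by simp
qed

text \<open>W is reducible iff for every vector x some a in span W has the same form values
  as x on the basis vectors of W; then x = a + (a + x) with a + x orthogonal to W.\<close>

lemma reducible_iff_matching:
  assumes g: "graph V A" and WV: "W \<subseteq> V"
  shows "reducible V A W \<longleftrightarrow>
           (\<forall>x \<subseteq> V. \<exists>a \<in> span2 W. \<forall>w \<in> W. bform A a {w} \<longleftrightarrow> bform A x {w})"
proof -
  have shift_perp: "vadd a x \<in> perpE V A W \<longleftrightarrow> (\<forall>w \<in> W. bform A a {w} \<longleftrightarrow> bform A x {w})"
    if "a \<in> span2 W" "x \<subseteq> V" for a x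
  proof -
    have "a \<subseteq> V" using span2_subset[OF that(1)] WV by blast
    then have "vadd a x \<subseteq> V" using that(2) by (rule vadd_subset)
    then show ?thesis by (auto simp: perpE_iff[OF g] bform_vadd_left[OF g])
  qed
  show ?thesis
  proof
    assume red: "reducible V A W"
    show "\<forall>x \<subseteq> V. \<exists>a \<in> span2 W. \<forall>w \<in> W. bform A a {w} \<longleftrightarrow> bform A x {w}"
    proof (intro allI impI)
      fix x assume x: "x \<subseteq> V"
      have "x \<in> {vadd a b | a b. a \<in> span2 W \<and> b \<in> perpE V A W}"
        using red x unfolding reducible_def by simp
      then obtain a b where ab: "x = vadd a b" and a: "a \<in> span2 W" and b: "b \<in> perpE V A W"
        by blast
      have "vadd a x \<in> perpE V A W"
        using b by (simp add: ab vadd_cancel_left)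
      then show "\<exists>a \<in> span2 W. \<forall>w \<in> W. bform A a {w} \<longleftrightarrow> bform A x {w}"
        using shift_perp[OF a x] a by blast
    qed
  next
    assume match: "\<forall>x \<subseteq> V. \<exists>a \<in> span2 W. \<forall>w \<in> W. bform A a {w} \<longleftrightarrow> bform A x {w}"
    show "reducible V A W"
      unfolding reducible_def
    proof (intro equalityI subsetI)
      fix y assume "y \<in> {vadd a b | a b. a \<in> span2 W \<and> b \<in> perpE V A W}"
      then obtain a b where "y = vadd a b" "a \<in> span2 W" "b \<in> perpE V A W"
        by blast
      moreover have "a \<subseteq> V" using span2_subset[OF \<open>a \<in> span2 W\<close>] WV by blast
      moreover have "b \<subseteq> V" using \<open>b \<in> perpE V A W\<close> by (simp add: perpE_def)
      ultimately show "y \<in> Pow V" by (simp add: vadd_subset)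
    next
      fix x assume "x \<in> Pow V"
      then have x: "x \<subseteq> V" by simp
      then obtain a where a: "a \<in> span2 W" and "\<forall>w \<in> W. bform A a {w} \<longleftrightarrow> bform A x {w}"
        using match by blast
      then have "vadd a x \<in> perpE V A W" using shift_perp[OF a x] by blast
      moreover have "x = vadd a (vadd a x)" by (simp add: vadd_cancel_left)
      ultimately show "x \<in> {vadd a b | a b. a \<in> span2 W \<and> b \<in> perpE V A W}"
        using a by blast
    qed
  qed
qed

lemma reducible_loop:
  assumes g: "graph V A" and "v \<in> V" and "A v v"
  shows "reducible V A {v}"
proof -
  have "\<exists>a \<in> span2 {v}. bform A a {v} \<longleftrightarrow> bform A x {v}" for x
  proof
    show "(if bform A x {v} then {v} else {}) \<in> span2 {v}"
      by (simp add: span2_basis span2.zero)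
    show "bform A (if bform A x {v} then {v} else {}) {v} \<longleftrightarrow> bform A x {v}"
      using \<open>A v v\<close> by simp
  qed
  then show ?thesis using reducible_iff_matching[OF g] \<open>v \<in> V\<close> by simp
qed

text \<open>Domain of gnr: a single isolated loopless vertex (the zero vector always matches).\<close>

lemma reducible_isolated:
  assumes g: "graph V A" and "v \<in> V" and iso: "\<forall>u \<in> V. \<not> A v u"
  shows "reducible V A {v}"
proof -
  have "\<not> bform A x {v}" if "x \<subseteq> V" for x
  proof -
    have no_pairs: "{(p, q). p \<in> x \<and> q \<in> {v} \<and> A p q} = {}"
      using iso that g unfolding graph_def by blast
    show ?thesis unfolding bform_def no_pairs by simp
  qed
  then show ?thesis
    using reducible_iff_matching[OF g] \<open>v \<in> V\<close> span2.zero by fastforce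
qed

text \<open>Domain of gdr: two adjacent loopless vertices.  Adding the basis vector of one
  endpoint flips exactly the form value at the other endpoint.\<close>

lemma reducible_edge:
  assumes g: "graph V A" and "v1 \<in> V" "v2 \<in> V"
    and l1: "\<not> A v1 v1" and l2: "\<not> A v2 v2" and e: "A v1 v2"
  shows "reducible V A {v1, v2}"
proof -
  have e': "A v2 v1" using e g unfolding graph_def by blast
  have "\<exists>a \<in> span2 {v1, v2}. \<forall>w \<in> {v1, v2}. bform A a {w} \<longleftrightarrow> bform A x {w}" for x
  proof -
    define a1 where "a1 = (if bform A x {v2} then {v1} else {})"
    define a2 where "a2 = (if bform A x {v1} then {v2} else {})"
    have "a1 \<in> span2 {v1, v2}" "a2 \<in> span2 {v1, v2}"
      unfolding a1_def a2_def by (simp_all add: span2_basis span2.zero)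
    moreover have "bform A (vadd a1 a2) {w} \<longleftrightarrow> bform A x {w}" if "w \<in> {v1, v2}" for w
      using that l1 l2 e e' unfolding a1_def a2_def by (auto simp: bform_vadd_left[OF g])
    ultimately show ?thesis using span2_vadd by blast
  qed
  then show ?thesis using reducible_iff_matching[OF g] \<open>v1 \<in> V\<close> \<open>v2 \<in> V\<close> by simp
qed

text \<open>If W spans a totally isotropic subspace (no adjacencies inside W), reducibility
  forces the vertices of W to be isolated: a neighbour u of w gives E({u},{w}) = 1,
  which no element of span W can match.\<close>

lemma reducible_without_internal_edges_isolated:
  assumes g: "graph V A" and WV: "W \<subseteq> V" and red: "reducible V A W"
    and no_edges: "\<forall>p \<in> W. \<forall>q \<in> W. \<not> A p q"
    and "w \<in> W" and "u \<in> V"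
  shows "\<not> A w u"
proof
  assume "A w u"
  then have "A u w" using g unfolding graph_def by blast
  obtain a where a: "a \<in> span2 W" and "bform A a {w} \<longleftrightarrow> bform A {u} {w}"
    using red \<open>w \<in> W\<close> \<open>u \<in> V\<close> reducible_iff_matching[OF g WV] by (metis empty_subsetI insert_subset)
  then have "bform A a {w}" using \<open>A u w\<close> by simp
  moreover have no_pairs: "{(p, q). p \<in> a \<and> q \<in> {w} \<and> A p q} = {}"
    using span2_subset[OF a] no_edges \<open>w \<in> W\<close> by blast
  ultimately show False unfolding bform_def no_pairs by simp
qed

lemma not_reducible_loopless_non_isolated:
  assumes g: "graph V A" and "v \<in> V" "u \<in> V" and "\<not> A v v" and "A v u"
  shows "\<not> reducible V A {v}"
  using reducible_without_internal_edges_isolated[OF g, of "{v}" v u] assms by auto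

definition rule_domain :: "'a set \<Rightarrow> ('a \<Rightarrow> 'a \<Rightarrow> bool) \<Rightarrow> 'a set \<Rightarrow> bool" where
  "rule_domain V A W \<longleftrightarrow>
     (\<exists>v. W = {v} \<and> A v v)
   \<or> (\<exists>v1 v2. W = {v1, v2} \<and> v1 \<noteq> v2 \<and> \<not> A v1 v1 \<and> \<not> A v2 v2 \<and> A v1 v2)
   \<or> (\<exists>v. W = {v} \<and> \<not> A v v \<and> (\<forall>u \<in> V. \<not> A v u))"

text \<open>A minimally reducible set containing a loop, an edge, or neither must already be
  the corresponding rule domain, since that domain is a reducible subset of it.\<close>

lemma minimally_reducible_rule_domain:
  assumes g: "graph V A" and WV: "W \<subseteq> V" and min: "minimally_reducible V A W"
  shows "rule_domain V A W"
proof -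
  have red: "reducible V A W"
    and smaller: "\<And>W'. W' \<subseteq> W \<Longrightarrow> W' \<noteq> {} \<Longrightarrow> reducible V A W' \<Longrightarrow> W' = W"
    using min unfolding minimally_reducible_def by auto
  consider (loop) v where "v \<in> W" "A v v"
    | (edge) v1 v2 where "v1 \<in> W" "v2 \<in> W" "A v1 v2" "\<forall>v \<in> W. \<not> A v v"
    | (no_edges) "\<forall>p \<in> W. \<forall>q \<in> W. \<not> A p q"
    by blast
  then show ?thesis
  proof cases
    case loop
    then have "reducible V A {v}" using reducible_loop[OF g] WV by blast
    then have "W = {v}" using smaller[of "{v}"] loop by blast
    then show ?thesis using loop unfolding rule_domain_def by blast
  next
    case edge
    then have "v1 \<noteq> v2" by auto
    have "reducible V A {v1, v2}" using reducible_edge[OF g] edge WV by blast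
    then have "W = {v1, v2}" using smaller[of "{v1, v2}"] edge by blast
    then show ?thesis using edge \<open>v1 \<noteq> v2\<close> unfolding rule_domain_def by blast
  next
    case no_edges
    obtain v where "v \<in> W" using min unfolding minimally_reducible_def by blast
    then have iso: "\<forall>u \<in> V. \<not> A v u"
      using reducible_without_internal_edges_isolated[OF g WV red no_edges] by blast
    then have "reducible V A {v}" using reducible_isolated[OF g] \<open>v \<in> W\<close> WV by blast
    then have "W = {v}" using smaller[of "{v}"] \<open>v \<in> W\<close> by blast
    then show ?thesis using iso no_edges unfolding rule_domain_def by blast
  qed
qed

lemma minimally_reducible_singleton:
  assumes "reducible V A {v}"
  shows "minimally_reducible V A {v}"
proof -
  have "W' = {}" if "W' \<subset> {v}" for W' :: "'a set"
    using that by blast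
  then show ?thesis using assms unfolding minimally_reducible_def by blast
qed

text \<open>Conversely each rule domain is minimally reducible; for an edge domain the two
  singleton subsets are not reducible since their vertices are loopless and adjacent.\<close>

lemma rule_domain_minimally_reducible:
  assumes g: "graph V A" and WV: "W \<subseteq> V" and dom: "rule_domain V A W"
  shows "minimally_reducible V A W"
proof -
  consider (loop) v where "W = {v}" "A v v"
    | (edge) v1 v2 where "W = {v1, v2}" "v1 \<noteq> v2" "\<not> A v1 v1" "\<not> A v2 v2" "A v1 v2"
    | (isolated) v where "W = {v}" "\<forall>u \<in> V. \<not> A v u"
    using dom unfolding rule_domain_def by blast
  then show ?thesis
  proof cases
    case loop
    have "reducible V A {v}" using reducible_loop[OF g] loop WV by simp
    then show ?thesis using loop(1) by (simp add: minimally_reducible_singleton)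
  next
    case isolated
    have "reducible V A {v}" using reducible_isolated[OF g] isolated WV by simp
    then show ?thesis using isolated(1) by (simp add: minimally_reducible_singleton)
  next
    case edge
    have V: "v1 \<in> V" "v2 \<in> V" using edge(1) WV by auto
    have "A v2 v1" using edge(5) g unfolding graph_def by blast
    then have "\<not> reducible V A {v1}" "\<not> reducible V A {v2}"
      using not_reducible_loopless_non_isolated[OF g] V edge by blast+
    moreover have "W' = {v1} \<or> W' = {v2}" if "W' \<subset> {v1, v2}" "W' \<noteq> {}" for W'
      using that by blast
    moreover have "reducible V A W"
      using reducible_edge[OF g V] edge by simp
    ultimately show ?thesis
      unfolding minimally_reducible_def using edge(1) by blast
  qed
qed

theorem mainTheorem9:
  fixes V :: "'a set" and A :: "'a \<Rightarrow> 'a \<Rightarrow> bool" and W :: "'a set"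
  assumes "graph V A" and "W \<subseteq> V" and "W \<noteq> {}"
  shows "minimally_reducible V A W \<longleftrightarrow>
           ((\<exists>v. W = {v} \<and> A v v)
          \<or> (\<exists>v1 v2. W = {v1, v2} \<and> v1 \<noteq> v2 \<and> \<not> A v1 v1 \<and> \<not> A v2 v2 \<and> A v1 v2)
          \<or> (\<exists>v. W = {v} \<and> \<not> A v v \<and> (\<forall>u \<in> V. \<not> A v u)))"
  using minimally_reducible_rule_domain[OF assms(1,2)]
    rule_domain_minimally_reducible[OF assms(1,2)]
  unfolding rule_domain_def by blast

end
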